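(* Let $g\in C^{0,1}(\mathbb R)$ be monotonically increasing with Lipschitz constant $g_{\rm Lip}$, and let $\mathcal T_h$ consist of non-obtuse simplices only. Then for all $q\in Q^1_h$ and all $\phi\in S^1_h$, on every simplex $K\in\mathcal T_h$, $$g_{\rm Lip}\,\nabla\pi_h[g(q)]\cdot\nabla q\ge\|\nabla\pi_h[g(q)]\|^2\qquad\text{and}\qquad g_{\rm Lip}\,\nabla\pi_h[g(\phi)]::\nabla\phi\ge\|\nabla\pi_h[g(\phi)]\|^2 .$$
   Context: $D\subset\mathbb R^d$ ($d\in\{2,3\}$) a bounded polytope; $\mathcal T_h$ a conforming partition of $D$ into simplices, non-obtuse meaning all dihedral angles of every simplex are at most $\pi/2$. $Q^1_h$: continuous piecewise linear scalar functions on $\mathcal T_h$; $S^1_h$: continuous piecewise linear symmetric-matrix-valued functions. $\pi_h$: nodal interpolation onto continuous piecewise linears at the vertices of $\mathcal T_h$ (entrywise for matrices). For a symmetric matrix $\phi=O^TDO$ ($O$ orthogonal, $D$ diagonal), $g(\phi):=O^Tg(D)O$ with $g(D)$ diagonal with entries $g(D_{ii})$; this is applied pointwise. For matrix fields, $\nabla\phi::\nabla\psi=\sum_{i,j}\nabla\phi_{ij}\cdot\nabla\psi_{ij}$ and $\|\nabla\phi\|^2=\nabla\phi::\nabla\phi$. *)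

theory Defs
  imports "HOL-Analysis.Analysis"
begin

text \<open>A simplex of the mesh is represented by its (finite, affinely independent) vertex set S;
  the closed simplex is convex hull S.\<close>

definition is_simplex_vertices :: "(real^'n) set \<Rightarrow> bool" where
  "is_simplex_vertices S \<longleftrightarrow> finite S \<and> card S = CARD('n) + 1 \<and> \<not> affine_dependent S"

definition conforming_mesh :: "(real^'n) set set \<Rightarrow> (real^'n) set \<Rightarrow> bool" where
  "conforming_mesh T D \<longleftrightarrow> finite T \<and> T \<noteq> {} \<and> (\<forall>S\<in>T. is_simplex_vertices S)
     \<and> D = (\<Union>S\<in>T. convex hull S)
     \<and> (\<forall>S1\<in>T. \<forall>S2\<in>T. convex hull S1 \<inter> convex hull S2 = convex hull (S1 \<inter> S2))"

definition mesh_vertices :: "(real^'n) set set \<Rightarrow> (real^'n) set" where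
  "mesh_vertices T = \<Union>T"

definition facet_normal :: "(real^'n) set \<Rightarrow> real^'n \<Rightarrow> real^'n" where
  "facet_normal S v = (SOME n. norm n = 1
      \<and> (\<forall>a\<in>S - {v}. \<forall>b\<in>S - {v}. n \<bullet> (a - b) = 0)
      \<and> (\<forall>a\<in>S - {v}. n \<bullet> (v - a) < 0))"

text \<open>Interior dihedral angle between the facets opposite to v and w.\<close>

definition dihedral_angle :: "(real^'n) set \<Rightarrow> real^'n \<Rightarrow> real^'n \<Rightarrow> real" where
  "dihedral_angle S v w = pi - arccos (facet_normal S v \<bullet> facet_normal S w)"

definition non_obtuse_mesh :: "(real^'n) set set \<Rightarrow> bool" where
  "non_obtuse_mesh T \<longleftrightarrow> (\<forall>S\<in>T. \<forall>v\<in>S. \<forall>w\<in>S. v \<noteq> w \<longrightarrow> dihedral_angle S v w \<le> pi / 2)"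

definition Q1 :: "(real^'n) set set \<Rightarrow> (real^'n) set \<Rightarrow> (real^'n \<Rightarrow> real) set" where
  "Q1 T D = {q. continuous_on D q \<and>
      (\<forall>S\<in>T. \<exists>a c. \<forall>x\<in>convex hull S. q x = a \<bullet> x + c)}"

definition grad_on :: "(real^'n) set \<Rightarrow> (real^'n \<Rightarrow> real) \<Rightarrow> real^'n" where
  "grad_on S f = (THE a. \<exists>c. \<forall>x\<in>convex hull S. f x = a \<bullet> x + c)"

text \<open>Nodal interpolation onto Q^1_h (convention: the interpolant vanishes outside D).\<close>

definition nodal_interp :: "(real^'n) set set \<Rightarrow> (real^'n) set \<Rightarrow> (real^'n \<Rightarrow> real) \<Rightarrow> (real^'n \<Rightarrow> real)" where
  "nodal_interp T D u = (THE w. w \<in> Q1 T D \<and> (\<forall>v\<in>mesh_vertices T. w v = u v)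
      \<and> (\<forall>x. x \<notin> D \<longrightarrow> w x = 0))"

definition nodal_interp_mat ::
  "(real^'n) set set \<Rightarrow> (real^'n) set \<Rightarrow> (real^'n \<Rightarrow> real^'m^'m) \<Rightarrow> (real^'n \<Rightarrow> real^'m^'m)" where
  "nodal_interp_mat T D U = (\<lambda>x. \<chi> i j. nodal_interp T D (\<lambda>y. U y $ i $ j) x)"

definition symmetric_mat :: "real^'m^'m \<Rightarrow> bool" where
  "symmetric_mat A \<longleftrightarrow> transpose A = A"

definition diagonal_mat :: "real^'m^'m \<Rightarrow> bool" where
  "diagonal_mat A \<longleftrightarrow> (\<forall>i j. i \<noteq> j \<longrightarrow> A $ i $ j = 0)"

definition S1 :: "(real^'n) set set \<Rightarrow> (real^'n) set \<Rightarrow> (real^'n \<Rightarrow> real^'m^'m) set" where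
  "S1 T D = {\<phi>. (\<forall>i j. (\<lambda>x. \<phi> x $ i $ j) \<in> Q1 T D) \<and> (\<forall>x\<in>D. symmetric_mat (\<phi> x))}"

definition mat_fun :: "(real \<Rightarrow> real) \<Rightarrow> real^'m^'m \<Rightarrow> real^'m^'m" where
  "mat_fun g A = (SOME B. \<exists>Q Dg. orthogonal_matrix Q \<and> diagonal_mat Dg
       \<and> A = transpose Q ** Dg ** Q
       \<and> B = transpose Q ** (\<chi> i j. if i = j then g (Dg $ i $ i) else 0) ** Q)"

definition mat_grad_inner ::
  "(real^'n) set \<Rightarrow> (real^'n \<Rightarrow> real^'m^'m) \<Rightarrow> (real^'n \<Rightarrow> real^'m^'m) \<Rightarrow> real" where
  "mat_grad_inner S \<phi> \<psi> = (\<Sum>i\<in>UNIV. \<Sum>j\<in>UNIV.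
      grad_on S (\<lambda>x. \<phi> x $ i $ j) \<bullet> grad_on S (\<lambda>x. \<psi> x $ i $ j))"

end

theory Submission
  imports Defs
begin

(* On a simplex S let b_k be the gradient of the barycentric coordinate of the
   vertex k.  As the b_k sum to zero, affine interpolants of vertex data u, p satisfy the
   edge formula  grad u . grad p = -1/2 sum_{k,l} (b_k . b_l)(u_k - u_l)(p_k - p_l).
   On a non-obtuse simplex b_k . b_l <= 0 for k ~= l, since b_k is a negative multiple of
   the unit normal of the facet opposite to k.  Both claims thus reduce to edge estimates:
   (g a - g b)^2 <= L (g a - g b)(a - b) for scalars, and for symmetric matrices
   |g(A) - g(B)|_F^2 <= L <g(A) - g(B), A - B>_F, which follows from the scalar one by
   expanding both Frobenius products over pairs of eigenvectors of A and B. *)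

text \<open>For monotone L-Lipschitz g, the difference quotient of g lies in [0, L]; this gives the
  estimate on a single pair of values.\<close>

lemma mono_lipschitz_sq_le:
  fixes g :: "real \<Rightarrow> real"
  assumes mono: "mono g" and lip: "L-lipschitz_on UNIV g"
  shows "(g a - g b)^2 \<le> L * ((g a - g b) * (a - b))"
proof -
  have L: "\<bar>g a - g b\<bar> \<le> L * \<bar>a - b\<bar>" using lip by (simp add: lipschitz_on_def dist_real_def)
  show ?thesis
  proof (cases "b \<le> a")
    case True
    hence "g b \<le> g a" using mono by (simp add: mono_def)
    hence "(g a - g b) * (g a - g b) \<le> (g a - g b) * (L * (a - b))" using L True
      by (intro mult_left_mono) auto
    thus ?thesis by (simp add: power2_eq_square algebra_simps)
  next
    case False
    hence "g a \<le> g b" using mono by (simp add: mono_def)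
    hence "(g b - g a) * (g b - g a) \<le> (g b - g a) * (L * (b - a))" using L False
      by (intro mult_left_mono) auto
    thus ?thesis by (simp add: power2_eq_square algebra_simps)
  qed
qed

section \<open>Spectral theorem for real symmetric matrices\<close>

lemma symmetric_inner_swap:
  fixes A :: "real^'m^'m"
  assumes "transpose A = A"
  shows "x \<bullet> (A *v y) = (A *v x) \<bullet> y"
  by (metis assms dot_lmul_matrix inner_commute transpose_matrix_vector)

text \<open>First-order condition: a unit vector x0 maximising the Rayleigh quotient along every
  line through x0 is an eigenvector with eigenvalue x0 . A x0.\<close>

lemma rayleigh_max_is_eigenvector:
  fixes A :: "real^'m^'m" and x0 y :: "real^'m" and lam :: real
  assumes sym: "transpose A = A"
    and max: "\<And>t::real. (x0 + t *\<^sub>R y) \<bullet> (A *v (x0 + t *\<^sub>R y)) \<le> lam * ((x0 + t *\<^sub>R y) \<bullet> (x0 + t *\<^sub>R y))"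
    and y: "y = A *v x0 - lam *\<^sub>R x0"
    and unit: "x0 \<bullet> x0 = 1" and lam: "lam = x0 \<bullet> (A *v x0)"
  shows "y = 0"
proof (rule ccontr)
  assume "y \<noteq> 0"
  hence yy: "y \<bullet> y > 0" by simp
  have yx: "y \<bullet> x0 = 0" using unit lam unfolding y by (simp add: inner_diff_left inner_commute[of "A *v x0" x0])
  have yAx: "y \<bullet> (A *v x0) = y \<bullet> y" using y yx by (simp add: inner_diff_right inner_diff_left)
  have xAy: "x0 \<bullet> (A *v y) = y \<bullet> y" using symmetric_inner_swap[OF sym, of x0 y] yAx by (simp add: inner_commute)
  define C where "C = \<bar>lam * (y \<bullet> y) - y \<bullet> (A *v y)\<bar>"
  define t where "t = (y \<bullet> y) / (C + 1)"
  have C0: "C \<ge> 0" by (simp add: C_def)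
  have t0: "t > 0" using yy C0 by (simp add: t_def)
  have "(x0 + t *\<^sub>R y) \<bullet> (A *v (x0 + t *\<^sub>R y)) = lam + 2*t*(y \<bullet> y) + t*t*(y \<bullet> (A *v y))"
    by (simp add: matrix_vector_right_distrib inner_add_left inner_add_right lam xAy yAx algebra_simps)
  moreover have "(x0 + t *\<^sub>R y) \<bullet> (x0 + t *\<^sub>R y) = 1 + t*t*(y \<bullet> y)"
    using yx by (simp add: inner_add_left inner_add_right unit inner_commute[of x0 y] algebra_simps)
  ultimately have "lam + 2*t*(y \<bullet> y) + t*t*(y \<bullet> (A *v y)) \<le> lam * (1 + t*t*(y \<bullet> y))"
    using max[of t] by simp
  hence "2*t*(y \<bullet> y) \<le> t*t*(lam * (y \<bullet> y) - y \<bullet> (A *v y))" by (simp add: algebra_simps)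
  also have "\<dots> \<le> t*t*C" using t0 by (intro mult_left_mono) (auto simp: C_def)
  finally have "2*(y \<bullet> y) \<le> t*C" using t0 by (simp add: power2_eq_square mult.assoc)
  also have "t*C = (y \<bullet> y) * (C/(C+1))" by (simp add: t_def)
  also have "\<dots> \<le> (y \<bullet> y)" using yy C0 by (intro mult_left_le) auto
  finally show False using yy by simp
qed

lemma rayleigh_bound:
  fixes A :: "real^'m^'m" and V :: "(real^'m) set"
  assumes x0K: "x0 \<in> {x. norm x = 1 \<and> (\<forall>v\<in>V. v \<bullet> x = 0)}"
    and mx: "\<forall>y\<in>{x. norm x = 1 \<and> (\<forall>v\<in>V. v \<bullet> x = 0)}. y \<bullet> (A *v y) \<le> x0 \<bullet> (A *v x0)"
    and zV: "\<forall>v\<in>V. v \<bullet> z = 0"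
  shows "z \<bullet> (A *v z) \<le> (x0 \<bullet> (A *v x0)) * (z \<bullet> z)"
proof (cases "z = 0")
  case True then show ?thesis by simp
next
  case False
  define u where "u = (1 / norm z) *\<^sub>R z"
  have "u \<in> {x. norm x = 1 \<and> (\<forall>v\<in>V. v \<bullet> x = 0)}" using False zV by (simp add: u_def)
  hence "u \<bullet> (A *v u) \<le> x0 \<bullet> (A *v x0)" using mx by blast
  moreover have "u \<bullet> (A *v u) = (z \<bullet> (A *v z)) / (norm z)^2"
    by (simp add: u_def matrix_vector_mult_scaleR power2_eq_square)
  ultimately have "(z \<bullet> (A *v z)) / (z \<bullet> z) \<le> x0 \<bullet> (A *v x0)" by (simp add: power2_norm_eq_inner)
  moreover have "z \<bullet> z > 0" using False by simp
  ultimately show ?thesis by (simp add: divide_le_eq mult.commute)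
qed

text \<open>Given fewer than n eigenvectors of a symmetric matrix, there is a unit eigenvector
  orthogonal to all of them: maximise the quadratic form on the unit sphere of their
  orthogonal complement, which the matrix leaves invariant.\<close>

lemma unit_eigenvector_orthogonal:
  fixes A :: "real^'m^'m" and V :: "(real^'m) set"
  assumes sym: "transpose A = A" and V: "finite V" "card V < CARD('m)"
    and eig: "\<forall>v\<in>V. \<exists>l. A *v v = l *\<^sub>R v"
  shows "\<exists>x0. x0 \<bullet> x0 = 1 \<and> (\<exists>l. A *v x0 = l *\<^sub>R x0) \<and> (\<forall>v\<in>V. v \<bullet> x0 = 0)"
proof -
  have "dim V < DIM(real^'m)" using V by (metis DIM_cart DIM_real dim_le_card' le_less_trans nat_mult_1_right)
  then obtain x where x: "x \<noteq> 0" "\<And>y. y \<in> span V \<Longrightarrow> orthogonal x y"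
    using orthogonal_to_subspace_exists by blast
  define K where "K = {x. norm x = 1 \<and> (\<forall>v\<in>V. v \<bullet> x = 0)}"
  have Keq: "K = sphere 0 1 \<inter> (\<Inter>v\<in>V. {x. v \<bullet> x = 0})" by (auto simp: K_def)
  have "compact K" unfolding Keq
    by (intro compact_Int_closed compact_sphere closed_INT ballI closed_hyperplane)
  moreover have "(1 / norm x) *\<^sub>R x \<in> K" using x by (auto simp: K_def orthogonal_def span_base inner_commute)
  hence "K \<noteq> {}" by auto
  moreover have "continuous_on K (\<lambda>y. y \<bullet> (A *v y))"
    by (intro continuous_intros linear_continuous_on matrix_vector_mul_bounded_linear)
  ultimately obtain x0 where x0: "x0 \<in> K" "\<forall>y\<in>K. y \<bullet> (A *v y) \<le> x0 \<bullet> (A *v x0)"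
    using continuous_attains_sup by blast
  define lam where "lam = x0 \<bullet> (A *v x0)"
  define y where "y = A *v x0 - lam *\<^sub>R x0"
  have unit: "x0 \<bullet> x0 = 1" using x0 by (simp add: K_def norm_eq_1)
  have yV: "\<forall>v\<in>V. v \<bullet> y = 0"
  proof
    fix v assume vV: "v \<in> V"
    then obtain l where l: "A *v v = l *\<^sub>R v" using eig by blast
    have "v \<bullet> (A *v x0) = (A *v v) \<bullet> x0" using symmetric_inner_swap[OF sym] by blast
    also have "\<dots> = 0" using l x0 vV by (simp add: K_def)
    finally show "v \<bullet> y = 0" using x0 vV by (simp add: y_def K_def inner_diff_right)
  qed
  have "y = 0"
  proof (rule rayleigh_max_is_eigenvector[OF sym _ y_def unit lam_def])
    fix t :: real
    have "\<forall>v\<in>V. v \<bullet> (x0 + t *\<^sub>R y) = 0" using yV x0 by (simp add: K_def inner_add_right)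
    then show "(x0 + t *\<^sub>R y) \<bullet> (A *v (x0 + t *\<^sub>R y)) \<le> lam * ((x0 + t *\<^sub>R y) \<bullet> (x0 + t *\<^sub>R y))"
      using rayleigh_bound[of x0 V A] x0 unfolding K_def lam_def by blast
  qed
  hence "A *v x0 = lam *\<^sub>R x0" by (simp add: y_def)
  thus ?thesis using unit x0 by (auto simp: K_def)
qed

lemma orthonormal_eigenvectors:
  fixes A :: "real^'m^'m"
  assumes sym: "transpose A = A"
  shows "k \<le> CARD('m) \<Longrightarrow> \<exists>V. finite V \<and> card V = k \<and> (\<forall>v\<in>V. v \<bullet> v = 1 \<and> (\<exists>l. A *v v = l *\<^sub>R v))
           \<and> (\<forall>v\<in>V. \<forall>w\<in>V. v \<noteq> w \<longrightarrow> v \<bullet> w = 0)"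
proof (induction k)
  case 0
  show ?case by (rule exI[of _ "{}"]) simp
next
  case (Suc k)
  then obtain V where V: "finite V" "card V = k" "\<forall>v\<in>V. v \<bullet> v = 1 \<and> (\<exists>l. A *v v = l *\<^sub>R v)"
     "\<forall>v\<in>V. \<forall>w\<in>V. v \<noteq> w \<longrightarrow> v \<bullet> w = 0" by auto
  obtain x0 where x0: "x0 \<bullet> x0 = 1" "\<exists>l. A *v x0 = l *\<^sub>R x0" "\<forall>v\<in>V. v \<bullet> x0 = 0"
    using unit_eigenvector_orthogonal[OF sym V(1)] V Suc.prems by auto
  have "x0 \<notin> V" using x0 by auto
  with V x0 show ?case
    by (intro exI[of _ "insert x0 V"]) (auto simp: inner_commute)
qed

lemma spectral_decomposition:
  fixes A :: "real^'m^'m"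
  assumes sym: "transpose A = A"
  shows "\<exists>Q Dg. orthogonal_matrix Q \<and> diagonal_mat Dg \<and> A = transpose Q ** Dg ** Q"
proof -
  obtain V where V: "finite V" "card V = CARD('m)" "\<forall>v\<in>V. v \<bullet> v = 1 \<and> (\<exists>l. A *v v = l *\<^sub>R v)"
     "\<forall>v\<in>V. \<forall>w\<in>V. v \<noteq> w \<longrightarrow> v \<bullet> w = 0"
    using orthonormal_eigenvectors[OF sym, of "CARD('m)"] by auto
  obtain h where h: "bij_betw h (UNIV::'m set) V"
    using finite_same_card_bij[of "UNIV::'m set" V] V by auto
  define lam where "lam v = (SOME l. A *v v = l *\<^sub>R v)" for v
  have eig: "A *v h p = lam (h p) *\<^sub>R h p" for p
  proof -
    have "h p \<in> V" using h bij_betwE by blast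
    then obtain l where "A *v h p = l *\<^sub>R h p" using V by blast
    then show ?thesis unfolding lam_def by (rule someI)
  qed
  have orth: "h p \<bullet> h q = (if p = q then 1 else 0)" for p q
  proof -
    have "h p \<in> V" "h q \<in> V" using h bij_betwE by blast+
    moreover have "p \<noteq> q \<Longrightarrow> h p \<noteq> h q" using h by (metis bij_betw_def inj_on_def UNIV_I)
    ultimately show ?thesis using V by auto
  qed
  define Q :: "real^'m^'m" where "Q = (\<chi> p. h p)"
  define Dg :: "real^'m^'m" where "Dg = (\<chi> p q. if p = q then lam (h p) else 0)"
  have "Q ** transpose Q = mat 1"
    using orth by (simp add: vec_eq_iff matrix_matrix_mult_def Q_def transpose_def mat_def inner_vec_def)
  hence QtQ: "transpose Q ** Q = mat 1" using matrix_left_right_inverse by blast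
  have "(Q ** A) $ p $ j = (Dg ** Q) $ p $ j" for p j
  proof -
    have "(Q ** A) $ p $ j = (A *v h p) $ j"
      using sym by (simp add: matrix_matrix_mult_def matrix_vector_mult_def Q_def vec_eq_iff
          transpose_def mult.commute)
    also have "\<dots> = (Dg ** Q) $ p $ j"
      by (simp add: eig matrix_matrix_mult_def Dg_def Q_def if_distrib[where f="\<lambda>x. x * _"] cong: if_cong)
    finally show ?thesis .
  qed
  hence "Q ** A = Dg ** Q" by (simp add: vec_eq_iff)
  hence "A = transpose Q ** Dg ** Q"
    by (metis QtQ matrix_mul_assoc matrix_mul_lid)
  moreover have "orthogonal_matrix Q" using QtQ by (simp add: orthogonal_matrix)
  moreover have "diagonal_mat Dg" by (simp add: diagonal_mat_def Dg_def)
  ultimately show ?thesis by blast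
qed


section \<open>Frobenius products of matrices in spectral form\<close>

definition frob :: "real^'m^'m \<Rightarrow> real^'m^'m \<Rightarrow> real" where
  "frob A B = (\<Sum>i\<in>UNIV. \<Sum>j\<in>UNIV. A $ i $ j * B $ i $ j)"

definition spectral_mat :: "real^'m^'m \<Rightarrow> ('m \<Rightarrow> real) \<Rightarrow> real^'m^'m" where
  "spectral_mat Q d = transpose Q ** (\<chi> i j. if i = j then d i else 0) ** Q"

definition overlap :: "real^'m^'m \<Rightarrow> real^'m^'m \<Rightarrow> 'm \<Rightarrow> 'm \<Rightarrow> real" where
  "overlap Q P p q = (\<Sum>i\<in>UNIV. Q$p$i * P$q$i)"

lemma spectral_mat_entry: "spectral_mat Q d $ i $ j = (\<Sum>p\<in>UNIV. Q$p$i * d p * Q$p$j)"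
  by (simp add: spectral_mat_def matrix_matrix_mult_def transpose_def if_distrib[where f="\<lambda>x. x * _"]
      if_distrib[where f="\<lambda>x. _ * x"] sum_distrib_right cong: if_cong)

lemma sum_swap3:
  fixes f :: "'a \<Rightarrow> 'b \<Rightarrow> 'c \<Rightarrow> real"
  shows "(\<Sum>q\<in>K. \<Sum>i\<in>I. \<Sum>j\<in>J. f q i j) = (\<Sum>i\<in>I. \<Sum>j\<in>J. \<Sum>q\<in>K. f q i j)"
  by (subst sum.swap) (rule sum.cong[OF refl], rule sum.swap)

lemma sum_swap4:
  fixes f :: "'a \<Rightarrow> 'b \<Rightarrow> 'c \<Rightarrow> 'd \<Rightarrow> real"
  shows "(\<Sum>i\<in>I. \<Sum>j\<in>J. \<Sum>p\<in>P. \<Sum>q\<in>K. f i j p q) = (\<Sum>p\<in>P. \<Sum>q\<in>K. \<Sum>i\<in>I. \<Sum>j\<in>J. f i j p q)"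
proof -
  have "(\<Sum>i\<in>I. \<Sum>j\<in>J. \<Sum>p\<in>P. \<Sum>q\<in>K. f i j p q) = (\<Sum>i\<in>I. \<Sum>p\<in>P. \<Sum>q\<in>K. \<Sum>j\<in>J. f i j p q)"
    by (rule sum.cong[OF refl], rule sum_swap3)
  also have "\<dots> = (\<Sum>p\<in>P. \<Sum>q\<in>K. \<Sum>i\<in>I. \<Sum>j\<in>J. f i j p q)"
    by (rule sum_swap3)
  finally show ?thesis .
qed

lemma frob_spectral_mat:
  "frob (spectral_mat Q d) (spectral_mat P e) = (\<Sum>p\<in>UNIV. \<Sum>q\<in>UNIV. d p * e q * (overlap Q P p q)^2)"
proof -
  have "frob (spectral_mat Q d) (spectral_mat P e)
     = (\<Sum>i\<in>UNIV. \<Sum>j\<in>UNIV. \<Sum>p\<in>UNIV. \<Sum>q\<in>UNIV. d p * e q * ((Q$p$i * P$q$i) * (Q$p$j * P$q$j)))"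
    by (simp add: frob_def spectral_mat_entry sum_product algebra_simps)
  also have "\<dots> = (\<Sum>p\<in>UNIV. \<Sum>q\<in>UNIV. \<Sum>i\<in>UNIV. \<Sum>j\<in>UNIV. d p * e q * ((Q$p$i * P$q$i) * (Q$p$j * P$q$j)))"
    by (rule sum_swap4)
  also have "\<dots> = (\<Sum>p\<in>UNIV. \<Sum>q\<in>UNIV. d p * e q * (overlap Q P p q)^2)"
  proof (intro sum.cong refl)
    fix p q
    have "(overlap Q P p q)^2 = (\<Sum>i\<in>UNIV. \<Sum>j\<in>UNIV. (Q$p$i * P$q$i) * (Q$p$j * P$q$j))"
      unfolding overlap_def power2_eq_square sum_product ..
    then show "(\<Sum>i\<in>UNIV. \<Sum>j\<in>UNIV. d p * e q * ((Q$p$i * P$q$i) * (Q$p$j * P$q$j)))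
        = d p * e q * (overlap Q P p q)^2"
      by (simp add: sum_distrib_left)
  qed
  finally show ?thesis .
qed

lemma orthogonal_matrix_rows: "orthogonal_matrix Q \<Longrightarrow> (\<Sum>i\<in>UNIV. Q$p$i * Q$q$i) = (if p = q then 1 else 0)"
  by (simp add: orthogonal_matrix_def vec_eq_iff matrix_matrix_mult_def transpose_def mat_def)

lemma orthogonal_matrix_cols: "orthogonal_matrix Q \<Longrightarrow> (\<Sum>q\<in>UNIV. Q$q$i * Q$q$j) = (if i = j then 1 else 0)"
  by (simp add: orthogonal_matrix_def vec_eq_iff matrix_matrix_mult_def transpose_def mat_def)

lemma overlap_self: "orthogonal_matrix Q \<Longrightarrow> overlap Q Q p q = (if p = q then 1 else 0)"
  by (simp add: overlap_def orthogonal_matrix_rows)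

lemma overlap_commute: "overlap P Q q p = overlap Q P p q"
  by (simp add: overlap_def mult.commute)

text \<open>Parseval: each eigenvector of Q has unit length when expanded in the eigenbasis of P.\<close>

lemma overlap_row_sum:
  assumes Q: "orthogonal_matrix Q" and P: "orthogonal_matrix P"
  shows "(\<Sum>q\<in>UNIV. (overlap Q P p q)^2) = 1"
proof -
  have "(\<Sum>q\<in>UNIV. (overlap Q P p q)^2)
      = (\<Sum>q\<in>UNIV. \<Sum>i\<in>UNIV. \<Sum>j\<in>UNIV. (Q$p$i * Q$p$j) * (P$q$i * P$q$j))"
    unfolding overlap_def power2_eq_square sum_product by (simp add: algebra_simps)
  also have "\<dots> = (\<Sum>i\<in>UNIV. \<Sum>j\<in>UNIV. \<Sum>q\<in>UNIV. (Q$p$i * Q$p$j) * (P$q$i * P$q$j))"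
    by (rule sum_swap3)
  also have "\<dots> = (\<Sum>i\<in>UNIV. \<Sum>j\<in>UNIV. (Q$p$i * Q$p$j) * (if i = j then 1 else 0))"
    by (simp add: sum_distrib_left[symmetric] orthogonal_matrix_cols[OF P])
  also have "\<dots> = (\<Sum>i\<in>UNIV. Q$p$i * Q$p$i)"
    by (simp add: if_distrib[where f="\<lambda>x. _ * x"] cong: if_cong)
  also have "\<dots> = 1" using orthogonal_matrix_rows[OF Q, of p p] by simp
  finally show ?thesis .
qed

lemma overlap_col_sum:
  assumes Q: "orthogonal_matrix Q" and P: "orthogonal_matrix P"
  shows "(\<Sum>p\<in>UNIV. (overlap Q P p q)^2) = 1"
  using overlap_row_sum[OF P Q, of q] by (simp add: overlap_commute)

lemma frob_spectral_diff:
  fixes Q P :: "real^'m^'m"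
  assumes Q: "orthogonal_matrix Q" and P: "orthogonal_matrix P"
  shows "frob (spectral_mat Q d1 - spectral_mat P d2) (spectral_mat Q e1 - spectral_mat P e2)
       = (\<Sum>p\<in>UNIV. \<Sum>q\<in>UNIV. (overlap Q P p q)^2 * ((d1 p - d2 q) * (e1 p - e2 q)))"
proof -
  let ?F = "\<lambda>Q d P e. frob (spectral_mat Q d) (spectral_mat P e)"
  let ?w = "\<lambda>p q. (overlap Q P p q)^2"
  have bilinear: "frob (spectral_mat Q d1 - spectral_mat P d2) (spectral_mat Q e1 - spectral_mat P e2)
     = ?F Q d1 Q e1 - ?F Q d1 P e2 - ?F P d2 Q e1 + ?F P d2 P e2"
    by (simp add: frob_def algebra_simps sum.distrib sum_subtractf)
  have QQ: "?F Q d1 Q e1 = (\<Sum>p\<in>UNIV. \<Sum>q\<in>UNIV. ?w p q * (d1 p * e1 p))"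
  proof -
    have "?F Q d1 Q e1 = (\<Sum>p\<in>UNIV. d1 p * e1 p)"
      by (simp add: frob_spectral_mat overlap_self[OF Q] if_distrib[where f="\<lambda>x. _ * x"]
          if_distrib[where f="\<lambda>x. x^2"] cong: if_cong)
    also have "\<dots> = (\<Sum>p\<in>UNIV. (d1 p * e1 p) * (\<Sum>q\<in>UNIV. ?w p q))"
      by (simp add: overlap_row_sum[OF Q P])
    finally show ?thesis by (simp add: sum_distrib_left mult.commute)
  qed
  have QP: "?F Q d1 P e2 = (\<Sum>p\<in>UNIV. \<Sum>q\<in>UNIV. ?w p q * (d1 p * e2 q))"
    unfolding frob_spectral_mat by (intro sum.cong refl) (simp only: mult.commute)
  have PQ: "?F P d2 Q e1 = (\<Sum>p\<in>UNIV. \<Sum>q\<in>UNIV. ?w p q * (d2 q * e1 p))"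
    unfolding frob_spectral_mat overlap_commute[of P Q]
    by (subst sum.swap) (simp only: mult.commute)
  have PP: "?F P d2 P e2 = (\<Sum>p\<in>UNIV. \<Sum>q\<in>UNIV. ?w p q * (d2 q * e2 q))"
  proof -
    have "?F P d2 P e2 = (\<Sum>q\<in>UNIV. d2 q * e2 q)"
      by (simp add: frob_spectral_mat overlap_self[OF P] if_distrib[where f="\<lambda>x. _ * x"]
          if_distrib[where f="\<lambda>x. x^2"] cong: if_cong)
    also have "\<dots> = (\<Sum>q\<in>UNIV. (d2 q * e2 q) * (\<Sum>p\<in>UNIV. ?w p q))"
      by (simp add: overlap_col_sum[OF Q P])
    finally show ?thesis by (subst sum.swap) (simp add: sum_distrib_left mult.commute)
  qed
  have expand: "?w p q * ((d1 p - d2 q) * (e1 p - e2 q)) = ?w p q * (d1 p * e1 p) - ?w p q * (d1 p * e2 q)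
      - ?w p q * (d2 q * e1 p) + ?w p q * (d2 q * e2 q)" for p q
    by (simp add: algebra_simps)
  show ?thesis unfolding bilinear QQ QP PQ PP expand
    by (simp only: sum.distrib sum_subtractf)
qed

lemma mat_fun_spectral:
  fixes A :: "real^'m^'m"
  assumes sym: "transpose A = A"
  shows "\<exists>Q d. orthogonal_matrix Q \<and> A = spectral_mat Q d \<and> mat_fun g A = spectral_mat Q (\<lambda>i. g (d i))"
proof -
  obtain Q Dg where QD: "orthogonal_matrix Q" "diagonal_mat Dg" "A = transpose Q ** Dg ** Q"
    using spectral_decomposition[OF sym] by blast
  have "\<exists>Q Dg. orthogonal_matrix Q \<and> diagonal_mat Dg \<and> A = transpose Q ** Dg ** Q
       \<and> mat_fun g A = transpose Q ** (\<chi> i j. if i = j then g (Dg $ i $ i) else 0) ** Q"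
    unfolding mat_fun_def by (rule someI_ex) (use QD in blast)
  then obtain Q' Dg' where Q': "orthogonal_matrix Q'" "diagonal_mat Dg'" "A = transpose Q' ** Dg' ** Q'"
     "mat_fun g A = transpose Q' ** (\<chi> i j. if i = j then g (Dg' $ i $ i) else 0) ** Q'"
    by blast
  have "Dg' = (\<chi> i j. if i = j then Dg' $ i $ i else 0)"
    using Q'(2) by (simp add: vec_eq_iff diagonal_mat_def)
  hence "A = spectral_mat Q' (\<lambda>i. Dg' $ i $ i)" using Q'(3) by (simp add: spectral_mat_def)
  moreover have "mat_fun g A = spectral_mat Q' (\<lambda>i. g (Dg' $ i $ i))" using Q'(4) by (simp add: spectral_mat_def)
  ultimately show ?thesis using Q'(1) by blast
qed

text \<open>The matrix edge estimate: the scalar estimate applied to each pair of eigenvalues,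
  summed with the nonnegative weights of frob_spectral_diff.\<close>

lemma mat_fun_frob_le:
  fixes A B :: "real^'m^'m" and g :: "real \<Rightarrow> real"
  assumes symA: "transpose A = A" and symB: "transpose B = B"
    and mono: "mono g" and lip: "L-lipschitz_on UNIV g"
  shows "frob (mat_fun g A - mat_fun g B) (mat_fun g A - mat_fun g B)
      \<le> L * frob (mat_fun g A - mat_fun g B) (A - B)"
proof -
  obtain Q d where Q: "orthogonal_matrix Q" "A = spectral_mat Q d" "mat_fun g A = spectral_mat Q (\<lambda>i. g (d i))"
    using mat_fun_spectral[OF symA] by blast
  obtain P e where P: "orthogonal_matrix P" "B = spectral_mat P e" "mat_fun g B = spectral_mat P (\<lambda>i. g (e i))"
    using mat_fun_spectral[OF symB] by blast
  let ?w = "\<lambda>p q. (overlap Q P p q)^2" and ?dg = "\<lambda>p q. g (d p) - g (e q)"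
  have "frob (mat_fun g A - mat_fun g B) (mat_fun g A - mat_fun g B)
     = (\<Sum>p\<in>UNIV. \<Sum>q\<in>UNIV. ?w p q * (?dg p q * ?dg p q))"
    unfolding Q(3) P(3) by (rule frob_spectral_diff[OF Q(1) P(1)])
  also have "\<dots> \<le> (\<Sum>p\<in>UNIV. \<Sum>q\<in>UNIV. L * (?w p q * (?dg p q * (d p - e q))))"
  proof (intro sum_mono)
    fix p q
    have "?w p q * (?dg p q)^2 \<le> ?w p q * (L * (?dg p q * (d p - e q)))"
      using mono_lipschitz_sq_le[OF mono lip] by (intro mult_left_mono) auto
    thus "?w p q * (?dg p q * ?dg p q) \<le> L * (?w p q * (?dg p q * (d p - e q)))"
      by (simp add: power2_eq_square algebra_simps)
  qed
  also have "\<dots> = L * (\<Sum>p\<in>UNIV. \<Sum>q\<in>UNIV. ?w p q * (?dg p q * (d p - e q)))"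
    by (simp add: sum_distrib_left)
  also have "\<dots> = L * frob (mat_fun g A - mat_fun g B) (A - B)"
    unfolding Q(3) P(3) unfolding Q(2) P(2) frob_spectral_diff[OF Q(1) P(1)] ..
  finally show ?thesis .
qed



section \<open>Affine functions on simplices\<close>

lemma simplex_edge_basis:
  fixes S :: "(real^'n) set"
  assumes S: "is_simplex_vertices S" and a0: "a0 \<in> S"
  shows "independent ((\<lambda>x. x - a0) ` (S - {a0}))" "span ((\<lambda>x. x - a0) ` (S - {a0})) = UNIV"
proof -
  have fin: "finite S" and cS: "card S = CARD('n) + 1" and ai: "\<not> affine_dependent S"
    using S by (auto simp: is_simplex_vertices_def)
  have eq: "(\<lambda>x. x - a0) ` (S - {a0}) = (\<lambda>x. -a0 + x) ` (S - {a0})" by (auto simp: algebra_simps)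
  show ind: "independent ((\<lambda>x. x - a0) ` (S - {a0}))"
    unfolding eq using ai affine_dependent_iff_dependent2[OF a0] by blast
  have "inj_on (\<lambda>x. x - a0) (S - {a0})" by (auto simp: inj_on_def)
  hence "card ((\<lambda>x. x - a0) ` (S - {a0})) = CARD('n)" using fin cS a0 by (simp add: card_image)
  hence "UNIV \<subseteq> span ((\<lambda>x. x - a0) ` (S - {a0}))"
    by (intro card_ge_dim_independent) (use ind in auto)
  thus "span ((\<lambda>x. x - a0) ` (S - {a0})) = UNIV" by auto
qed

lemma simplex_nonempty: "is_simplex_vertices S \<Longrightarrow> S \<noteq> {}"
  by (auto simp: is_simplex_vertices_def)

lemma affine_interp_exists:
  fixes S :: "(real^'n) set" and u :: "real^'n \<Rightarrow> real"
  assumes S: "is_simplex_vertices S"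
  shows "\<exists>a c. \<forall>w\<in>S. a \<bullet> w + c = u w"
proof -
  obtain a0 where a0: "a0 \<in> S" using simplex_nonempty[OF S] by blast
  obtain l where l: "linear l" "\<forall>x\<in>(\<lambda>x. x - a0) ` (S - {a0}). l x = u (x + a0) - u a0"
    using real_vector.linear_independent_extend[OF simplex_edge_basis(1)[OF S a0],
        of "\<lambda>x. u (x + a0) - u a0"] by blast
  define a where "a = adjoint l 1"
  have la: "a \<bullet> x = l x" for x
    using adjoint_works[OF l(1), of x 1] by (simp add: a_def inner_commute[of _ x])
  have "a \<bullet> w + (u a0 - a \<bullet> a0) = u w" if w: "w \<in> S" for w
  proof (cases "w = a0")
    case False
    hence "l (w - a0) = u w - u a0" using w l(2) by auto
    then show ?thesis using la[of "w - a0"] by (simp add: inner_diff_right)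
  qed simp
  thus ?thesis by blast
qed

lemma affine_interp_unique:
  fixes S :: "(real^'n) set"
  assumes S: "is_simplex_vertices S" and eq: "\<forall>w\<in>S. a \<bullet> w + c = a' \<bullet> w + c'"
  shows "a = a' \<and> c = c'"
proof -
  obtain a0 where a0: "a0 \<in> S" using simplex_nonempty[OF S] by blast
  let ?d = "a - a'"
  have h: "?d \<bullet> w = c' - c" if "w \<in> S" for w
    using bspec[OF eq that] by (simp add: inner_diff_left)
  have "\<forall>y\<in>(\<lambda>x. x - a0) ` (S - {a0}). orthogonal ?d y"
    using h a0 by (auto simp: orthogonal_def inner_diff_right)
  hence "orthogonal ?d ?d"
    using simplex_edge_basis(2)[OF S a0]
    by (intro orthogonal_to_span[of ?d "(\<lambda>x. x - a0) ` (S - {a0})" ?d]) auto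
  hence "a = a'" by (simp add: orthogonal_self)
  moreover then have "c = c'" using eq a0 by auto
  ultimately show ?thesis by simp
qed

lemma affine_agree_on_hull:
  fixes X :: "(real^'n) set"
  assumes "x \<in> convex hull X" "\<forall>w\<in>X. a1 \<bullet> w + c1 = a2 \<bullet> w + c2"
  shows "a1 \<bullet> x + c1 = a2 \<bullet> x + c2"
proof -
  have "X \<subseteq> {y. (a1 - a2) \<bullet> y = c2 - c1}" using assms(2) by (auto simp: inner_diff_left algebra_simps)
  hence "convex hull X \<subseteq> {y. (a1 - a2) \<bullet> y = c2 - c1}"
    by (rule hull_minimal) (rule convex_hyperplane)
  thus ?thesis using assms(1) by (auto simp: inner_diff_left algebra_simps)
qed

lemma grad_on_affine:
  fixes S :: "(real^'n) set"
  assumes S: "is_simplex_vertices S" and f: "\<forall>x\<in>convex hull S. f x = a \<bullet> x + c"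
  shows "grad_on S f = a"
  unfolding grad_on_def
proof (rule the_equality)
  show "\<exists>c. \<forall>x\<in>convex hull S. f x = a \<bullet> x + c" using f by blast
next
  fix a' assume "\<exists>c. \<forall>x\<in>convex hull S. f x = a' \<bullet> x + c"
  then obtain c' where c': "\<forall>x\<in>convex hull S. f x = a' \<bullet> x + c'" by blast
  have "\<forall>w\<in>S. a' \<bullet> w + c' = a \<bullet> w + c" using f c' hull_subset[of S convex] by auto
  thus "a' = a" using affine_interp_unique[OF S] by blast
qed

definition vertex_affine :: "(real^'n) set \<Rightarrow> (real^'n \<Rightarrow> real) \<Rightarrow> (real^'n) \<times> real" where
  "vertex_affine S u = (SOME p. \<forall>w\<in>S. fst p \<bullet> w + snd p = u w)"

definition vertex_grad :: "(real^'n) set \<Rightarrow> (real^'n \<Rightarrow> real) \<Rightarrow> real^'n" where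
  "vertex_grad S u = fst (vertex_affine S u)"

definition vertex_const :: "(real^'n) set \<Rightarrow> (real^'n \<Rightarrow> real) \<Rightarrow> real" where
  "vertex_const S u = snd (vertex_affine S u)"

lemma vertex_affine_interp:
  assumes S: "is_simplex_vertices S"
  shows "\<forall>w\<in>S. vertex_grad S u \<bullet> w + vertex_const S u = u w"
proof -
  obtain a c where "\<forall>w\<in>S. a \<bullet> w + c = u w" using affine_interp_exists[OF S] by blast
  hence "\<exists>p. \<forall>w\<in>S. fst p \<bullet> w + snd p = u w" by (intro exI[of _ "(a,c)"]) simp
  thus ?thesis unfolding vertex_grad_def vertex_const_def vertex_affine_def by (rule someI_ex)
qed

lemma vertex_grad_unique:
  assumes S: "is_simplex_vertices S" and "\<forall>w\<in>S. a \<bullet> w + c = u w"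
  shows "vertex_grad S u = a"
  using affine_interp_unique[OF S, of "vertex_grad S u" "vertex_const S u" a c]
    vertex_affine_interp[OF S, of u] assms(2) by auto

section \<open>The nodal interpolant\<close>

lemma mesh_simplex: "conforming_mesh T D \<Longrightarrow> S \<in> T \<Longrightarrow> is_simplex_vertices S"
  by (auto simp: conforming_mesh_def)

text \<open>On a conforming mesh the affine interpolants of neighbouring simplices agree on the
  common face, because they agree at its vertices.\<close>

lemma vertex_affine_agree:
  assumes M: "conforming_mesh T D" and Sa: "Sa \<in> T" and Sb: "Sb \<in> T"
    and x: "x \<in> convex hull Sa" "x \<in> convex hull Sb"
  shows "vertex_grad Sa u \<bullet> x + vertex_const Sa u = vertex_grad Sb u \<bullet> x + vertex_const Sb u"
proof -
  have "x \<in> convex hull (Sa \<inter> Sb)" using M Sa Sb x by (auto simp: conforming_mesh_def)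
  moreover have "\<forall>w\<in>Sa \<inter> Sb. vertex_grad Sa u \<bullet> w + vertex_const Sa u = vertex_grad Sb u \<bullet> w + vertex_const Sb u"
    using vertex_affine_interp[OF mesh_simplex[OF M Sa], of u]
      vertex_affine_interp[OF mesh_simplex[OF M Sb], of u] by auto
  ultimately show ?thesis by (rule affine_agree_on_hull)
qed

definition piecewise_interp :: "(real^'n) set set \<Rightarrow> (real^'n) set \<Rightarrow> (real^'n \<Rightarrow> real) \<Rightarrow> real^'n \<Rightarrow> real" where
  "piecewise_interp T D u x = (if x \<in> D then
      vertex_grad (SOME S. S \<in> T \<and> x \<in> convex hull S) u \<bullet> x
        + vertex_const (SOME S. S \<in> T \<and> x \<in> convex hull S) u else 0)"

lemma mesh_domain: "conforming_mesh T D \<Longrightarrow> D = (\<Union>S\<in>T. convex hull S)"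
  by (simp add: conforming_mesh_def)

lemma piecewise_interp_on:
  assumes M: "conforming_mesh T D" and S: "S \<in> T" and x: "x \<in> convex hull S"
  shows "piecewise_interp T D u x = vertex_grad S u \<bullet> x + vertex_const S u"
proof -
  have xD: "x \<in> D" using mesh_domain[OF M] S x by blast
  have "\<exists>S'. S' \<in> T \<and> x \<in> convex hull S'" using S x by blast
  hence S': "(SOME S'. S' \<in> T \<and> x \<in> convex hull S') \<in> T \<and> x \<in> convex hull (SOME S'. S' \<in> T \<and> x \<in> convex hull S')"
    by (rule someI_ex)
  show ?thesis
    using xD vertex_affine_agree[OF M conjunct1[OF S'] S conjunct2[OF S'] x]
    by (simp add: piecewise_interp_def)
qed

text \<open>It is continuous on D by the pasting lemma for the finitely many closed simplices.\<close>

lemma piecewise_interp_Q1: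
  assumes M: "conforming_mesh T D"
  shows "piecewise_interp T D u \<in> Q1 T D"
proof -
  have contS: "continuous_on (convex hull S) (piecewise_interp T D u)" if S: "S \<in> T" for S
    by (rule continuous_on_eq[of _ "\<lambda>x. vertex_grad S u \<bullet> x + vertex_const S u"])
       (auto intro!: continuous_intros simp: piecewise_interp_on[OF M S])
  have closedS: "closed (convex hull S)" if S: "S \<in> T" for S
    using mesh_simplex[OF M S] unfolding is_simplex_vertices_def
    by (intro compact_imp_closed compact_convex_hull finite_imp_compact) blast
  have "finite T" using M by (simp add: conforming_mesh_def)
  hence "continuous_on D (piecewise_interp T D u)"
    using continuous_on_closed_Union[OF _ closedS contS] mesh_domain[OF M] by simp
  moreover have "\<forall>S\<in>T. \<exists>a c. \<forall>x\<in>convex hull S. piecewise_interp T D u x = a \<bullet> x + c"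
    using piecewise_interp_on[OF M] by blast
  ultimately show ?thesis by (simp add: Q1_def)
qed

lemma Q1_determined_by_vertices:
  assumes M: "conforming_mesh T D" and w: "w \<in> Q1 T D"
    and wv: "\<forall>v\<in>mesh_vertices T. w v = u v" and w0: "\<forall>x. x \<notin> D \<longrightarrow> w x = 0"
  shows "w = piecewise_interp T D u"
proof
  fix y show "w y = piecewise_interp T D u y"
  proof (cases "y \<in> D")
    case False then show ?thesis using w0 by (simp add: piecewise_interp_def)
  next
    case True
    then obtain S where S: "S \<in> T" "y \<in> convex hull S" using mesh_domain[OF M] by blast
    obtain a c where ac: "\<forall>x\<in>convex hull S. w x = a \<bullet> x + c" using w S(1) unfolding Q1_def by blast
    have "\<forall>s\<in>S. a \<bullet> s + c = vertex_grad S u \<bullet> s + vertex_const S u"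
      using ac wv S(1) vertex_affine_interp[OF mesh_simplex[OF M S(1)], of u]
      by (auto simp: mesh_vertices_def hull_inc)
    hence "a \<bullet> y + c = vertex_grad S u \<bullet> y + vertex_const S u" by (rule affine_agree_on_hull[OF S(2)])
    then show ?thesis using ac S piecewise_interp_on[OF M] by simp
  qed
qed

lemma nodal_interp_eq:
  assumes M: "conforming_mesh T D"
  shows "nodal_interp T D u = piecewise_interp T D u"
  unfolding nodal_interp_def
proof (rule the_equality)
  have "\<forall>v\<in>mesh_vertices T. piecewise_interp T D u v = u v"
    using piecewise_interp_on[OF M] vertex_affine_interp[OF mesh_simplex[OF M]]
    by (auto simp: mesh_vertices_def hull_inc)
  then show "piecewise_interp T D u \<in> Q1 T D \<and> (\<forall>v\<in>mesh_vertices T. piecewise_interp T D u v = u v)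
      \<and> (\<forall>x. x \<notin> D \<longrightarrow> piecewise_interp T D u x = 0)"
    using piecewise_interp_Q1[OF M] by (simp add: piecewise_interp_def)
qed (use Q1_determined_by_vertices[OF M] in blast)

lemma grad_nodal_interp:
  assumes M: "conforming_mesh T D" and S: "S \<in> T"
  shows "grad_on S (nodal_interp T D u) = vertex_grad S u"
  unfolding nodal_interp_eq[OF M]
  by (rule grad_on_affine[OF mesh_simplex[OF M S], where c="vertex_const S u"])
     (simp add: piecewise_interp_on[OF M S])

lemma grad_Q1:
  assumes M: "conforming_mesh T D" and S: "S \<in> T" and q: "q \<in> Q1 T D"
  shows "grad_on S q = vertex_grad S q"
proof -
  obtain a c where ac: "\<forall>x\<in>convex hull S. q x = a \<bullet> x + c" using q S unfolding Q1_def by blast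
  hence "grad_on S q = a" using grad_on_affine[OF mesh_simplex[OF M S]] by blast
  moreover have "\<forall>w\<in>S. a \<bullet> w + c = q w" using ac hull_inc[of _ S convex] by simp
  hence "vertex_grad S q = a" by (rule vertex_grad_unique[OF mesh_simplex[OF M S]])
  ultimately show ?thesis by simp
qed


section \<open>Barycentric gradients and the edge formula\<close>

definition bary_grad :: "(real^'n) set \<Rightarrow> real^'n \<Rightarrow> real^'n" where
  "bary_grad S k = vertex_grad S (\<lambda>w. if w = k then 1 else 0)"

lemma vertex_grad_bary_expansion:
  assumes S: "is_simplex_vertices S"
  shows "vertex_grad S u = (\<Sum>k\<in>S. u k *\<^sub>R bary_grad S k)"
proof (rule vertex_grad_unique[OF S])
  have fin: "finite S" using S by (simp add: is_simplex_vertices_def)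
  let ?c = "\<lambda>k. vertex_const S (\<lambda>w. if w = k then 1 else 0)"
  show "\<forall>w\<in>S. (\<Sum>k\<in>S. u k *\<^sub>R bary_grad S k) \<bullet> w + (\<Sum>k\<in>S. u k * ?c k) = u w"
  proof
    fix w assume w: "w \<in> S"
    have "(\<Sum>k\<in>S. u k *\<^sub>R bary_grad S k) \<bullet> w + (\<Sum>k\<in>S. u k * ?c k) = (\<Sum>k\<in>S. u k * (bary_grad S k \<bullet> w + ?c k))"
      by (simp add: inner_sum_left sum.distrib algebra_simps)
    also have "\<dots> = (\<Sum>k\<in>S. u k * (if w = k then 1 else 0))"
      using vertex_affine_interp[OF S] w unfolding bary_grad_def by (intro sum.cong refl) auto
    also have "\<dots> = u w" using fin w by (simp add: if_distrib[where f="\<lambda>x. _ * x"] cong: if_cong)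
    finally show "(\<Sum>k\<in>S. u k *\<^sub>R bary_grad S k) \<bullet> w + (\<Sum>k\<in>S. u k * ?c k) = u w" .
  qed
qed

text \<open>The barycentric coordinates sum to the constant 1, so their gradients sum to 0.\<close>

lemma bary_grad_sum:
  assumes S: "is_simplex_vertices S"
  shows "(\<Sum>k\<in>S. bary_grad S k) = 0"
proof -
  have "vertex_grad S (\<lambda>_. 1) = 0" by (rule vertex_grad_unique[OF S, of 0 1]) simp
  thus ?thesis using vertex_grad_bary_expansion[OF S, of "\<lambda>_. 1"] by simp
qed

lemma vertex_grad_inner_edge_sum:
  assumes S: "is_simplex_vertices S"
  shows "vertex_grad S u \<bullet> vertex_grad S p
     = - (1/2) * (\<Sum>k\<in>S. \<Sum>l\<in>S. (bary_grad S k \<bullet> bary_grad S l) * ((u k - u l) * (p k - p l)))"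
proof -
  let ?B = "\<lambda>k l. bary_grad S k \<bullet> bary_grad S l"
  have rows: "(\<Sum>l\<in>S. ?B k l) = 0" for k
    using bary_grad_sum[OF S] by (simp add: inner_sum_right[symmetric])
  have cols: "(\<Sum>k\<in>S. ?B k l) = 0" for l
    using bary_grad_sum[OF S] by (simp add: inner_sum_left[symmetric])
  have "vertex_grad S u \<bullet> vertex_grad S p = (\<Sum>l\<in>S. \<Sum>k\<in>S. p l * (u k * ?B k l))"
    unfolding vertex_grad_bary_expansion[OF S, of u] vertex_grad_bary_expansion[OF S, of p]
    by (simp only: inner_sum_left inner_sum_right inner_scaleR_left inner_scaleR_right sum_distrib_left)
  also have "\<dots> = (\<Sum>k\<in>S. \<Sum>l\<in>S. p l * (u k * ?B k l))" by (rule sum.swap)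
  also have "\<dots> = (\<Sum>k\<in>S. \<Sum>l\<in>S. ?B k l * (u k * p l))"
    by (intro sum.cong refl) (simp only: mult.commute mult.left_commute)
  finally have cross: "vertex_grad S u \<bullet> vertex_grad S p = (\<Sum>k\<in>S. \<Sum>l\<in>S. ?B k l * (u k * p l))" .
  have expand: "?B k l * ((u k - u l) * (p k - p l))
      = ?B k l * (u k * p k) - ?B k l * (u k * p l) - ?B k l * (u l * p k) + ?B k l * (u l * p l)" for k l
    by (simp add: algebra_simps)
  have diag1: "(\<Sum>k\<in>S. \<Sum>l\<in>S. ?B k l * (u k * p k)) = 0"
    using rows by (simp add: sum_distrib_right[symmetric])
  have diag2: "(\<Sum>k\<in>S. \<Sum>l\<in>S. ?B k l * (u l * p l)) = 0"
    using cols by (subst sum.swap) (simp add: sum_distrib_right[symmetric])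
  have mixed: "(\<Sum>k\<in>S. \<Sum>l\<in>S. ?B k l * (u l * p k)) = (\<Sum>k\<in>S. \<Sum>l\<in>S. ?B k l * (u k * p l))"
    by (subst sum.swap) (simp add: inner_commute)
  show ?thesis unfolding cross expand
    by (simp only: sum.distrib sum_subtractf diag1 diag2 mixed) simp
qed


section \<open>Non-obtuse simplices\<close>

text \<open>The unit outward normal of the facet opposite to v is a negative multiple of the
  barycentric gradient of v: both are orthogonal to that facet, and the barycentric
  coordinate of v increases towards v.\<close>

lemma facet_normal_bary_grad:
  fixes S :: "(real^'n) set"
  assumes S: "is_simplex_vertices S" and v: "v \<in> S"
  shows "\<exists>t<0. facet_normal S v = t *\<^sub>R bary_grad S v \<and> norm (facet_normal S v) = 1"
proof -
  have fin: "finite S" and cS: "card S = CARD('n) + 1" using S by (auto simp: is_simplex_vertices_def)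
  have "card (S - {v}) \<ge> 1" using fin cS v by simp
  then obtain a0 where a0: "a0 \<in> S" "a0 \<noteq> v"
    by (metis DiffE card_0_eq fin finite_Diff not_one_le_zero insertCI ex_in_conv)
  let ?b = "bary_grad S v" and ?c = "vertex_const S (\<lambda>w. if w = v then 1 else 0)"
  have val: "w \<in> S \<Longrightarrow> ?b \<bullet> w + ?c = (if w = v then 1 else 0)" for w
    using vertex_affine_interp[OF S] unfolding bary_grad_def by auto
  have to_v: "a \<in> S \<Longrightarrow> a \<noteq> v \<Longrightarrow> ?b \<bullet> (v - a) = 1" for a
    using val[OF v] val[of a] by (simp add: inner_diff_right)
  have on_facet: "a \<in> S \<Longrightarrow> a \<noteq> v \<Longrightarrow> a' \<in> S \<Longrightarrow> a' \<noteq> v \<Longrightarrow> ?b \<bullet> (a - a') = 0" for a a'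
    using val[of a] val[of a'] by (simp add: inner_diff_right)
  have b0: "?b \<noteq> 0" using to_v[OF a0] by auto
  define n0 where "n0 = (- 1 / norm ?b) *\<^sub>R ?b"
  have "norm n0 = 1 \<and> (\<forall>a\<in>S - {v}. \<forall>b\<in>S - {v}. n0 \<bullet> (a - b) = 0) \<and> (\<forall>a\<in>S - {v}. n0 \<bullet> (v - a) < 0)"
    using b0 on_facet to_v by (auto simp: n0_def)
  hence N: "norm (facet_normal S v) = 1 \<and> (\<forall>a\<in>S - {v}. \<forall>b\<in>S - {v}. facet_normal S v \<bullet> (a - b) = 0)
      \<and> (\<forall>a\<in>S - {v}. facet_normal S v \<bullet> (v - a) < 0)"
    unfolding facet_normal_def by (rule someI)
  let ?N = "facet_normal S v"
  define t where "t = ?N \<bullet> (v - a0)"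
  have t0: "t < 0" using N a0 by (auto simp: t_def)
  let ?d = "?N - t *\<^sub>R ?b"
  have "orthogonal ?d (w - a0)" if w: "w \<in> S" for w
  proof (cases "w = v")
    case True then show ?thesis using to_v[OF a0] by (simp add: orthogonal_def inner_diff_left t_def)
  next
    case False then show ?thesis using w N a0 on_facet[of w a0] by (simp add: orthogonal_def inner_diff_left)
  qed
  hence "orthogonal ?d ?d"
    using simplex_edge_basis(2)[OF S a0(1)]
    by (intro orthogonal_to_span[of ?d "(\<lambda>x. x - a0) ` (S - {a0})" ?d]) auto
  hence "?N = t *\<^sub>R ?b" by (simp add: orthogonal_self)
  thus ?thesis using t0 N by blast
qed

lemma bary_grad_inner_nonpos:
  fixes S :: "(real^'n) set"
  assumes S: "is_simplex_vertices S" and v: "v \<in> S" and w: "w \<in> S"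
    and angle: "dihedral_angle S v w \<le> pi / 2"
  shows "bary_grad S v \<bullet> bary_grad S w \<le> 0"
proof -
  obtain tv where tv: "tv < 0" "facet_normal S v = tv *\<^sub>R bary_grad S v" "norm (facet_normal S v) = 1"
    using facet_normal_bary_grad[OF S v] by blast
  obtain tw where tw: "tw < 0" "facet_normal S w = tw *\<^sub>R bary_grad S w" "norm (facet_normal S w) = 1"
    using facet_normal_bary_grad[OF S w] by blast
  let ?c = "facet_normal S v \<bullet> facet_normal S w"
  have "?c \<le> 0"
  proof (rule ccontr)
    assume c0: "\<not> ?c \<le> 0"
    have "\<bar>?c\<bar> \<le> norm (facet_normal S v) * norm (facet_normal S w)" by (rule Cauchy_Schwarz_ineq2)
    hence "?c \<le> 1" using tv(3) tw(3) by simp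
    hence "arccos ?c < arccos 0" using c0 by (intro arccos_less_arccos) auto
    hence "dihedral_angle S v w > pi / 2" by (simp add: dihedral_angle_def)
    thus False using angle by simp
  qed
  hence "(tv * tw) * (bary_grad S v \<bullet> bary_grad S w) \<le> 0" using tv(2) tw(2) by (simp add: algebra_simps)
  moreover have "tv * tw > 0" using tv tw by (simp add: mult_neg_neg)
  ultimately show ?thesis using mult_le_cancel_left_pos[of "tv * tw" "bary_grad S v \<bullet> bary_grad S w" 0] by simp
qed

lemma non_obtuse_bary_grad_nonpos:
  assumes M: "conforming_mesh T D" and NO: "non_obtuse_mesh T" and S: "S \<in> T"
    and kl: "k \<in> S" "l \<in> S" "k \<noteq> l"
  shows "bary_grad S k \<bullet> bary_grad S l \<le> 0"
proof (rule bary_grad_inner_nonpos[OF mesh_simplex[OF M S] kl(1,2)])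
  show "dihedral_angle S k l \<le> pi / 2" using NO S kl unfolding non_obtuse_mesh_def by blast
qed

lemma edge_sum_le:
  fixes B Y Z :: "'a \<Rightarrow> 'a \<Rightarrow> real"
  assumes B: "\<And>k l. k \<in> S \<Longrightarrow> l \<in> S \<Longrightarrow> k \<noteq> l \<Longrightarrow> B k l \<le> 0"
    and YZ: "\<And>k l. k \<in> S \<Longrightarrow> l \<in> S \<Longrightarrow> k \<noteq> l \<Longrightarrow> Y k l \<le> L * Z k l"
    and diag: "\<And>k. Y k k = 0" "\<And>k. Z k k = 0"
  shows "- (1/2) * (\<Sum>k\<in>S. \<Sum>l\<in>S. B k l * Y k l) \<le> L * (- (1/2) * (\<Sum>k\<in>S. \<Sum>l\<in>S. B k l * Z k l))"
proof -
  have "(\<Sum>k\<in>S. \<Sum>l\<in>S. B k l * (L * Z k l - Y k l)) \<le> 0"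
  proof (intro sum_nonpos)
    fix k l assume k: "k \<in> S" and l: "l \<in> S"
    show "B k l * (L * Z k l - Y k l) \<le> 0"
      using B[OF k l] YZ[OF k l] diag by (cases "k = l") (auto simp: mult_nonpos_nonneg)
  qed
  moreover have "(\<Sum>k\<in>S. \<Sum>l\<in>S. B k l * (L * Z k l - Y k l))
      = L * (\<Sum>k\<in>S. \<Sum>l\<in>S. B k l * Z k l) - (\<Sum>k\<in>S. \<Sum>l\<in>S. B k l * Y k l)"
    by (simp add: right_diff_distrib sum_subtractf sum_distrib_left mult.left_commute)
  ultimately show ?thesis by linarith
qed

lemma interp_scalar_le:
  assumes M: "conforming_mesh T D" and NO: "non_obtuse_mesh T"
    and mono: "mono g" and lip: "L-lipschitz_on UNIV g"
    and q: "q \<in> Q1 T D" and S: "S \<in> T"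
  shows "(norm (grad_on S (nodal_interp T D (g \<circ> q))))\<^sup>2
      \<le> L * (grad_on S (nodal_interp T D (g \<circ> q)) \<bullet> grad_on S q)"
proof -
  have SS: "is_simplex_vertices S" using mesh_simplex[OF M S] .
  let ?u = "g \<circ> q"
  have "(norm (grad_on S (nodal_interp T D ?u)))\<^sup>2 = vertex_grad S ?u \<bullet> vertex_grad S ?u"
    by (simp add: grad_nodal_interp[OF M S] power2_norm_eq_inner)
  also have "\<dots> = - (1/2) * (\<Sum>k\<in>S. \<Sum>l\<in>S. (bary_grad S k \<bullet> bary_grad S l) * ((?u k - ?u l) * (?u k - ?u l)))"
    by (rule vertex_grad_inner_edge_sum[OF SS])
  also have "\<dots> \<le> L * (- (1/2) * (\<Sum>k\<in>S. \<Sum>l\<in>S. (bary_grad S k \<bullet> bary_grad S l) * ((?u k - ?u l) * (q k - q l))))"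
    using mono_lipschitz_sq_le[OF mono lip]
    by (intro edge_sum_le non_obtuse_bary_grad_nonpos[OF M NO S]) (auto simp: power2_eq_square)
  also have "\<dots> = L * (grad_on S (nodal_interp T D ?u) \<bullet> grad_on S q)"
    by (simp add: grad_nodal_interp[OF M S] grad_Q1[OF M S q] vertex_grad_inner_edge_sum[OF SS])
  finally show ?thesis .
qed

lemma mat_grad_inner_edge_sum:
  fixes \<phi> \<psi> \<Phi> \<Psi> :: "real^'n \<Rightarrow> real^'m^'m"
  assumes S: "is_simplex_vertices S"
    and \<phi>: "\<And>i j. grad_on S (\<lambda>x. \<phi> x $ i $ j) = vertex_grad S (\<lambda>x. \<Phi> x $ i $ j)"
    and \<psi>: "\<And>i j. grad_on S (\<lambda>x. \<psi> x $ i $ j) = vertex_grad S (\<lambda>x. \<Psi> x $ i $ j)"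
  shows "mat_grad_inner S \<phi> \<psi>
    = - (1/2) * (\<Sum>k\<in>S. \<Sum>l\<in>S. (bary_grad S k \<bullet> bary_grad S l) * frob (\<Phi> k - \<Phi> l) (\<Psi> k - \<Psi> l))"
proof -
  let ?B = "\<lambda>k l. bary_grad S k \<bullet> bary_grad S l"
  let ?e = "\<lambda>i j k l. (\<Phi> k - \<Phi> l) $ i $ j * (\<Psi> k - \<Psi> l) $ i $ j"
  have "mat_grad_inner S \<phi> \<psi> = (\<Sum>i\<in>UNIV. \<Sum>j\<in>UNIV. - (1/2) * (\<Sum>k\<in>S. \<Sum>l\<in>S. ?B k l * ?e i j k l))"
    unfolding mat_grad_inner_def \<phi> \<psi> vertex_grad_inner_edge_sum[OF S] by simp
  also have "\<dots> = - (1/2) * (\<Sum>i\<in>UNIV. \<Sum>j\<in>UNIV. \<Sum>k\<in>S. \<Sum>l\<in>S. ?B k l * ?e i j k l)"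
    by (simp only: sum_distrib_left)
  also have "\<dots> = - (1/2) * (\<Sum>k\<in>S. \<Sum>l\<in>S. \<Sum>i\<in>UNIV. \<Sum>j\<in>UNIV. ?B k l * ?e i j k l)"
    by (rule arg_cong[where f="\<lambda>x. - (1/2) * x"], rule sum_swap4)
  also have "\<dots> = - (1/2) * (\<Sum>k\<in>S. \<Sum>l\<in>S. ?B k l * frob (\<Phi> k - \<Phi> l) (\<Psi> k - \<Psi> l))"
    by (simp only: frob_def sum_distrib_left)
  finally show ?thesis .
qed

lemma interp_matrix_le:
  fixes \<phi> :: "real^'n \<Rightarrow> real^'m^'m"
  assumes M: "conforming_mesh T D" and NO: "non_obtuse_mesh T"
    and mono: "mono g" and lip: "L-lipschitz_on UNIV g"
    and \<phi>: "\<phi> \<in> S1 T D" and S: "S \<in> T"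
  shows "mat_grad_inner S (nodal_interp_mat T D (mat_fun g \<circ> \<phi>)) (nodal_interp_mat T D (mat_fun g \<circ> \<phi>))
      \<le> L * mat_grad_inner S (nodal_interp_mat T D (mat_fun g \<circ> \<phi>)) \<phi>"
proof -
  have SS: "is_simplex_vertices S" using mesh_simplex[OF M S] .
  let ?G = "\<lambda>y. mat_fun g (\<phi> y)" and ?I = "nodal_interp_mat T D (mat_fun g \<circ> \<phi>)"
  let ?B = "\<lambda>k l. bary_grad S k \<bullet> bary_grad S l"
  have grad_I: "grad_on S (\<lambda>x. ?I x $ i $ j) = vertex_grad S (\<lambda>x. ?G x $ i $ j)" for i j
    using grad_nodal_interp[OF M S] by (simp add: nodal_interp_mat_def o_def)
  have grad_\<phi>: "grad_on S (\<lambda>x. \<phi> x $ i $ j) = vertex_grad S (\<lambda>x. \<phi> x $ i $ j)" for i j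
    using \<phi> grad_Q1[OF M S] by (simp add: S1_def)
  have "S \<subseteq> D" using mesh_domain[OF M] S hull_subset[of S convex] by blast
  hence sym: "transpose (\<phi> k) = \<phi> k" if "k \<in> S" for k
    using \<phi> that by (auto simp: S1_def symmetric_mat_def)
  have "mat_grad_inner S ?I ?I = - (1/2) * (\<Sum>k\<in>S. \<Sum>l\<in>S. ?B k l * frob (?G k - ?G l) (?G k - ?G l))"
    by (rule mat_grad_inner_edge_sum[OF SS grad_I grad_I])
  also have "\<dots> \<le> L * (- (1/2) * (\<Sum>k\<in>S. \<Sum>l\<in>S. ?B k l * frob (?G k - ?G l) (\<phi> k - \<phi> l)))"
  proof (rule edge_sum_le)
    show "?B k l \<le> 0" if "k \<in> S" "l \<in> S" "k \<noteq> l" for k l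
      using non_obtuse_bary_grad_nonpos[OF M NO S that] .
    show "frob (?G k - ?G l) (?G k - ?G l) \<le> L * frob (?G k - ?G l) (\<phi> k - \<phi> l)"
      if "k \<in> S" "l \<in> S" for k l
      using mat_fun_frob_le[OF sym[OF that(1)] sym[OF that(2)] mono lip] .
  qed (simp_all add: frob_def)
  also have "\<dots> = L * mat_grad_inner S ?I \<phi>"
    by (simp add: mat_grad_inner_edge_sum[OF SS grad_I grad_\<phi>])
  finally show ?thesis .
qed

theorem lemma5p1:
  fixes T :: "(real^'n) set set" and D :: "(real^'n) set"
    and g :: "real \<Rightarrow> real" and L :: real
  assumes "CARD('n) = 2 \<or> CARD('n) = 3"
    and "conforming_mesh T D"
    and "non_obtuse_mesh T"
    and "mono g"
    and "L-lipschitz_on UNIV g"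
  shows "(\<forall>q\<in>Q1 T D. \<forall>S\<in>T.
            L * (grad_on S (nodal_interp T D (g \<circ> q)) \<bullet> grad_on S q)
              \<ge> (norm (grad_on S (nodal_interp T D (g \<circ> q))))\<^sup>2)
       \<and> (\<forall>\<phi>\<in>(S1 T D :: (real^'n \<Rightarrow> real^'m^'m) set). \<forall>S\<in>T.
            L * mat_grad_inner S (nodal_interp_mat T D (mat_fun g \<circ> \<phi>)) \<phi>
              \<ge> mat_grad_inner S (nodal_interp_mat T D (mat_fun g \<circ> \<phi>))
                                  (nodal_interp_mat T D (mat_fun g \<circ> \<phi>)))"
  using interp_scalar_le[OF assms(2-5)] interp_matrix_le[OF assms(2-5)] by blast

end
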